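(* Let $p$ be a prime and $G$ a $p$-group containing a normal abelian subgroup $A$ of finite index. Assume that $A$ contains a $G$-invariant subgroup $C$ such that $A/C$ is a divisible Chernikov group. If $G$ has no proper contranormal subgroups, then $[G,A]\le C$.
   Context: A subgroup $H$ of $G$ is contranormal in $G$ if its normal closure $H^G$ equals $G$; it is proper if $H\ne G$. *)

theory Defs
  imports "HOL-Algebra.Algebra" "HOL-Computational_Algebra.Primes"
begin

definition p_group :: "('a, 'b) monoid_scheme \<Rightarrow> nat \<Rightarrow> bool" where
  "p_group G p \<longleftrightarrow> group G \<and> (\<forall>x\<in>carrier G. \<exists>n::nat. x [^]\<^bsub>G\<^esub> (p ^ n) = \<one>\<^bsub>G\<^esub>)"

definition normal_closure :: "('a, 'b) monoid_scheme \<Rightarrow> 'a set \<Rightarrow> 'a set" where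
  "normal_closure G H =
     generate G (\<Union>g\<in>carrier G. \<Union>h\<in>H. {g \<otimes>\<^bsub>G\<^esub> h \<otimes>\<^bsub>G\<^esub> inv\<^bsub>G\<^esub> g})"

definition contranormal :: "('a, 'b) monoid_scheme \<Rightarrow> 'a set \<Rightarrow> bool" where
  "contranormal G H \<longleftrightarrow> subgroup H G \<and> normal_closure G H = carrier G"

definition commutator_subgroup :: "('a, 'b) monoid_scheme \<Rightarrow> 'a set \<Rightarrow> 'a set \<Rightarrow> 'a set" where
  "commutator_subgroup G S T =
     generate G (\<Union>x\<in>S. \<Union>y\<in>T.
        {(inv\<^bsub>G\<^esub> x) \<otimes>\<^bsub>G\<^esub> (inv\<^bsub>G\<^esub> y) \<otimes>\<^bsub>G\<^esub> x \<otimes>\<^bsub>G\<^esub> y})"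

definition divisible_group :: "('a, 'b) monoid_scheme \<Rightarrow> bool" where
  "divisible_group H \<longleftrightarrow>
     (\<forall>x\<in>carrier H. \<forall>n::nat. n > 0 \<longrightarrow> (\<exists>y\<in>carrier H. y [^]\<^bsub>H\<^esub> n = x))"

definition quasicyclic_subgroup :: "('a, 'b) monoid_scheme \<Rightarrow> 'a set \<Rightarrow> bool" where
  "quasicyclic_subgroup H P \<longleftrightarrow>
     (\<exists>(q::nat) (x::nat \<Rightarrow> 'a). Factorial_Ring.prime q \<and> (\<forall>n. x n \<in> carrier H) \<and>
        x 0 \<noteq> \<one>\<^bsub>H\<^esub> \<and> x 0 [^]\<^bsub>H\<^esub> q = \<one>\<^bsub>H\<^esub> \<and>
        (\<forall>n. x (Suc n) [^]\<^bsub>H\<^esub> q = x n) \<and> P = generate H (range x))"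

definition internal_direct_product :: "('a, 'b) monoid_scheme \<Rightarrow> 'a set \<Rightarrow> 'a set list \<Rightarrow> bool" where
  "internal_direct_product H N Ps \<longleftrightarrow>
     generate H (\<Union>(set Ps)) = N \<and>
     (\<forall>i<length Ps. subgroup (Ps ! i) H \<and> Ps ! i \<lhd> H\<lparr>carrier := N\<rparr> \<and>
        Ps ! i \<inter> generate H (\<Union>j\<in>{j. j < length Ps \<and> j \<noteq> i}. Ps ! j) = {\<one>\<^bsub>H\<^esub>})"

definition chernikov_group :: "('a, 'b) monoid_scheme \<Rightarrow> bool" where
  "chernikov_group H \<longleftrightarrow> group H \<and>
     (\<exists>N Ps. N \<lhd> H \<and> finite (rcosets\<^bsub>H\<^esub> N) \<and>
        (\<forall>P\<in>set Ps. quasicyclic_subgroup H P) \<and> internal_direct_product H N Ps)"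

definition divisible_chernikov_group :: "('a, 'b) monoid_scheme \<Rightarrow> bool" where
  "divisible_chernikov_group H \<longleftrightarrow> chernikov_group H \<and> divisible_group H"

end

theory Submission
  imports Defs
begin

(* Let T be a finite transversal of A in G, S = <T> and M = {a : A. [G, a] <= C}, a normal
   subgroup of G. By Schreier's lemma S meet A is generated by finitely many elements of the
   abelian periodic group A, so it has a finite exponent E.
   The subgroup H = M S is contranormal: its normal closure L contains T and [G, A]; writing
   a : A as c b^n with c : C and n = |G : A| (A/C is divisible), b^n is the norm of b, which
   lies in M, times a product of commutators, so A <= L and L = A T = G. Hence G = M S.
   Finally, for x = m' s' and y = c b^E with b = m s (m, m' : M, s, s' : S, c : C), we get
   [x, y] = [x, b]^E = [s', s]^E = 1 modulo C, because [s', s] lies in S meet A. *)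

definition commutator :: "('a, 'b) monoid_scheme \<Rightarrow> 'a \<Rightarrow> 'a \<Rightarrow> 'a" where
  "commutator G x y = inv\<^bsub>G\<^esub> x \<otimes>\<^bsub>G\<^esub> inv\<^bsub>G\<^esub> y \<otimes>\<^bsub>G\<^esub> x \<otimes>\<^bsub>G\<^esub> y"

context group
begin

lemma inv_mult_cancel_left [simp]:
  "x \<in> carrier G \<Longrightarrow> y \<in> carrier G \<Longrightarrow> inv x \<otimes> (x \<otimes> y) = y"
  by (simp add: m_assoc [symmetric])

lemma mult_inv_cancel_left [simp]:
  "x \<in> carrier G \<Longrightarrow> y \<in> carrier G \<Longrightarrow> x \<otimes> (inv x \<otimes> y) = y"
  by (simp add: m_assoc [symmetric])

lemma commutator_in_commutator_subgroup:
  "x \<in> S \<Longrightarrow> y \<in> T \<Longrightarrow> commutator G x y \<in> commutator_subgroup G S T"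
  unfolding commutator_subgroup_def commutator_def by (rule generate.incl) blast

lemma commutator_subgroup_is_subgroup:
  assumes "S \<subseteq> carrier G" "T \<subseteq> carrier G"
  shows "subgroup (commutator_subgroup G S T) G"
  unfolding commutator_subgroup_def
  by (rule generate_is_subgroup) (use assms in \<open>auto simp: subset_iff\<close>)

lemma commutator_subgroup_subset:
  assumes "subgroup K G" and "\<And>x y. x \<in> S \<Longrightarrow> y \<in> T \<Longrightarrow> commutator G x y \<in> K"
  shows "commutator_subgroup G S T \<subseteq> K"
  unfolding commutator_subgroup_def
  by (rule generate_subgroup_incl[OF _ assms(1)]) (use assms(2) in \<open>auto simp: commutator_def\<close>)

lemma normal_closure_is_subgroup:
  assumes "H \<subseteq> carrier G" shows "subgroup (normal_closure G H) G"
  unfolding normal_closure_def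
  by (rule generate_is_subgroup) (use assms in \<open>auto simp: subset_iff\<close>)

lemma conj_in_normal_closure:
  "g \<in> carrier G \<Longrightarrow> h \<in> H \<Longrightarrow> g \<otimes> h \<otimes> inv g \<in> normal_closure G H"
  unfolding normal_closure_def by (rule generate.incl) blast

lemma subset_normal_closure:
  assumes "H \<subseteq> carrier G" shows "H \<subseteq> normal_closure G H"
proof
  fix h assume h: "h \<in> H"
  have "\<one> \<otimes> h \<otimes> inv \<one> \<in> normal_closure G H" using h by (intro conj_in_normal_closure) auto
  then show "h \<in> normal_closure G H" using subsetD[OF assms h] by simp
qed

lemma finite_set_exponent:
  assumes "finite F" "F \<subseteq> carrier G" and "\<And>x. x \<in> F \<Longrightarrow> \<exists>n::nat>0. x [^] n = \<one>"
  shows "\<exists>E::nat>0. \<forall>x\<in>F. x [^] E = \<one>"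
proof (intro exI conjI ballI)
  have ord_pos: "ord x > 0" if x: "x \<in> F" for x
  proof -
    obtain n :: nat where n: "n > 0" "x [^] n = \<one>" using assms(3) x by blast
    have "ord x dvd n" using pow_eq_id[of x n] n(2) x assms(2) by blast
    with n(1) show ?thesis by (cases "ord x = 0") auto
  qed
  then show "(\<Prod>x\<in>F. ord x) > 0"
    using assms(1) by (simp add: prod_pos)
  show "x [^] (\<Prod>x\<in>F. ord x) = \<one>" if x: "x \<in> F" for x
  proof -
    have "ord x dvd (\<Prod>x\<in>F. ord x)" using assms(1) x by (rule dvd_prodI)
    then show ?thesis using pow_eq_id x assms(2) by blast
  qed
qed

lemma generate_pow_eq_one:
  assumes A: "subgroup A G" and comm: "\<And>x y. x \<in> A \<Longrightarrow> y \<in> A \<Longrightarrow> x \<otimes> y = y \<otimes> x"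
    and "F \<subseteq> A" and F_exp: "\<And>x. x \<in> F \<Longrightarrow> x [^] (E::nat) = \<one>"
    and "w \<in> generate G F"
  shows "w [^] E = \<one>"
  using \<open>w \<in> generate G F\<close>
proof (induction rule: generate.induct)
  case (inv h)
  then show ?case
    using F_exp \<open>F \<subseteq> A\<close> subgroup.mem_carrier[OF A] by (auto simp: nat_pow_inv)
next
  case (eng h1 h2)
  have "generate G F \<subseteq> A" by (rule generate_subgroup_incl[OF \<open>F \<subseteq> A\<close> A])
  with eng.hyps have "h1 \<in> A" "h2 \<in> A" by auto
  with eng.IH show ?case
    using pow_mult_distrib[OF comm] subgroup.mem_carrier[OF A] by simp
qed (auto simp: F_exp)

lemma subgroup_nat_pow_closed: "subgroup H G \<Longrightarrow> h \<in> H \<Longrightarrow> h [^] (n::nat) \<in> H"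
  using subgroup_int_pow_closed[of H h "int n"] by (simp add: int_pow_int)

text \<open>Choosing \<open>\<one>\<close> to represent \<open>H\<close> itself is what makes the Schreier generators generate
  all of \<open>generate G T \<inter> H\<close>: for \<open>u \<in> H\<close> the rewriting of \<open>\<one> \<otimes> u\<close> ends in \<open>u\<close> itself.\<close>

definition rcoset_rep :: "'a set \<Rightarrow> 'a set \<Rightarrow> 'a" where
  "rcoset_rep H Q = (if Q = H then \<one> else SOME x. x \<in> Q)"

definition rcoset_transversal :: "'a set \<Rightarrow> 'a set" where
  "rcoset_transversal H = rcoset_rep H ` (rcosets H)"

definition Schreier_generators :: "'a set \<Rightarrow> 'a set" where
  "Schreier_generators H =
     {t \<otimes> x \<otimes> inv (rcoset_rep H (H #> (t \<otimes> x))) | t x.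
        t \<in> rcoset_transversal H \<and> x \<in> rcoset_transversal H \<union> (\<lambda>t. inv t) ` rcoset_transversal H}"

context
  fixes H assumes H: "subgroup H G"
begin

lemma rcoset_rep_in:
  assumes "Q \<in> rcosets H" shows "rcoset_rep H Q \<in> Q"
proof -
  obtain g where g: "g \<in> carrier G" "Q = H #> g" using assms unfolding RCOSETS_def by blast
  then have "\<exists>x. x \<in> Q" using rcos_self[OF _ H] by blast
  then show ?thesis
    unfolding rcoset_rep_def using subgroup.one_closed[OF H] by (auto intro: someI_ex)
qed

lemma rcoset_rep_carrier: "Q \<in> rcosets H \<Longrightarrow> rcoset_rep H Q \<in> carrier G"
  using rcoset_rep_in rcosets_part_G[OF H] by blast

lemma rcoset_rep_rcoset:
  assumes "Q \<in> rcosets H" shows "H #> rcoset_rep H Q = Q"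
proof -
  obtain g where g: "g \<in> carrier G" "Q = H #> g" using assms unfolding RCOSETS_def by blast
  then show ?thesis using repr_independence[OF _ g(1) H] rcoset_rep_in[OF assms] by metis
qed

lemma rcoset_mem_rcosets: "g \<in> carrier G \<Longrightarrow> H #> g \<in> rcosets H"
  by (rule rcosetsI[OF subgroup.subset[OF H]])

lemma rcoset_rep_mod:
  assumes g: "g \<in> carrier G" shows "g \<otimes> inv (rcoset_rep H (H #> g)) \<in> H"
proof -
  have "g \<in> H #> rcoset_rep H (H #> g)"
    using rcoset_rep_rcoset[OF rcoset_mem_rcosets[OF g]] rcos_self[OF g H] by simp
  then show ?thesis
    using subgroup.rcos_module_imp[OF H is_group rcoset_rep_carrier[OF rcoset_mem_rcosets[OF g]]]
    by blast
qed

lemma bij_betw_r_coset_rcosets: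
  assumes g: "g \<in> carrier G"
  shows "bij_betw (\<lambda>Q. Q #> g) (rcosets H) (rcosets H)"
proof (rule bij_betw_byWitness[where f' = "\<lambda>Q. Q #> inv g"])
  have shift: "Q #> h \<in> rcosets H" if Q: "Q \<in> rcosets H" and h: "h \<in> carrier G" for Q h
  proof -
    obtain x where x: "x \<in> carrier G" "Q = H #> x" using Q unfolding RCOSETS_def by blast
    then have "Q #> h = H #> (x \<otimes> h)" using coset_mult_assoc[OF subgroup.subset[OF H] x(1) h] by simp
    then show ?thesis using rcoset_mem_rcosets x(1) h by simp
  qed
  have cancel: "Q #> h #> inv h = Q" if Q: "Q \<in> rcosets H" and h: "h \<in> carrier G" for Q h
  proof -
    have "Q \<subseteq> carrier G" using Q rcosets_part_G[OF H] by blast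
    then show ?thesis using coset_mult_assoc[of Q h "inv h"] h by simp
  qed
  show "\<forall>Q\<in>rcosets H. Q #> g #> inv g = Q" using cancel g by blast
  show "\<forall>Q\<in>rcosets H. Q #> inv g #> g = Q" using cancel[of _ "inv g"] g by simp
  show "(\<lambda>Q. Q #> g) ` (rcosets H) \<subseteq> rcosets H" "(\<lambda>Q. Q #> inv g) ` (rcosets H) \<subseteq> rcosets H"
    using shift g by auto
qed

lemma rcoset_transversal_carrier: "rcoset_transversal H \<subseteq> carrier G"
  unfolding rcoset_transversal_def using rcoset_rep_carrier by blast

lemma finite_rcoset_transversal: "finite (rcosets H) \<Longrightarrow> finite (rcoset_transversal H)"
  unfolding rcoset_transversal_def by simp

lemma rcoset_rep_in_transversal:
  "g \<in> carrier G \<Longrightarrow> rcoset_rep H (H #> g) \<in> rcoset_transversal H"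
  unfolding rcoset_transversal_def using rcoset_mem_rcosets by blast

lemma rcoset_rep_of_mem: "h \<in> H \<Longrightarrow> rcoset_rep H (H #> h) = \<one>"
  using subgroup.rcos_const[OF H is_group] by (simp add: rcoset_rep_def)

lemma one_in_rcoset_transversal: "\<one> \<in> rcoset_transversal H"
  using rcoset_rep_in_transversal[of \<one>] rcoset_rep_of_mem[OF subgroup.one_closed[OF H]] by simp

lemma rcoset_rep_of_transversal:
  "t \<in> rcoset_transversal H \<Longrightarrow> rcoset_rep H (H #> t) = t"
  unfolding rcoset_transversal_def using rcoset_rep_rcoset by auto

lemma rcoset_rep_mult_cong:
  assumes g: "g \<in> carrier G" and h: "h \<in> carrier G"
  shows "rcoset_rep H (H #> (rcoset_rep H (H #> g) \<otimes> h)) = rcoset_rep H (H #> (g \<otimes> h))"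
proof -
  have r: "rcoset_rep H (H #> g) \<in> carrier G" using rcoset_rep_carrier[OF rcoset_mem_rcosets[OF g]] .
  have "H #> (rcoset_rep H (H #> g) \<otimes> h) = (H #> g) #> h"
    using rcoset_rep_rcoset[OF rcoset_mem_rcosets[OF g]] coset_mult_assoc[OF subgroup.subset[OF H] r h]
    by simp
  also have "\<dots> = H #> (g \<otimes> h)" using coset_mult_assoc[OF subgroup.subset[OF H] g h] .
  finally show ?thesis by simp
qed

lemma set_mult_rcoset_transversal: "H <#> rcoset_transversal H = carrier G"
proof
  show "H <#> rcoset_transversal H \<subseteq> carrier G"
    using setmult_subset_G[OF subgroup.subset[OF H] rcoset_transversal_carrier] .
  show "carrier G \<subseteq> H <#> rcoset_transversal H"
  proof
    fix g assume g: "g \<in> carrier G"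
    let ?t = "rcoset_rep H (H #> g)"
    have t: "?t \<in> carrier G" using rcoset_transversal_carrier rcoset_rep_in_transversal[OF g] by blast
    have "g = (g \<otimes> inv ?t) \<otimes> ?t" using g t by (simp add: m_assoc)
    then show "g \<in> H <#> rcoset_transversal H"
      unfolding set_mult_def using rcoset_rep_mod[OF g] rcoset_rep_in_transversal[OF g] by blast
  qed
qed

lemma finite_Schreier_generators:
  "finite (rcosets H) \<Longrightarrow> finite (Schreier_generators H)"
  unfolding Schreier_generators_def
  using finite_rcoset_transversal by (intro finite_image_set2) auto

lemma Schreier_generators_subset:
  "Schreier_generators H \<subseteq> generate G (rcoset_transversal H) \<inter> H"
proof
  fix s assume "s \<in> Schreier_generators H"
  then obtain t x where t: "t \<in> rcoset_transversal H"
    and x: "x \<in> rcoset_transversal H \<union> (\<lambda>t. inv t) ` rcoset_transversal H"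
    and s: "s = t \<otimes> x \<otimes> inv (rcoset_rep H (H #> (t \<otimes> x)))"
    unfolding Schreier_generators_def by blast
  let ?T = "generate G (rcoset_transversal H)"
  have T: "subgroup ?T G" by (rule generate_is_subgroup[OF rcoset_transversal_carrier])
  have "t \<in> ?T" "x \<in> ?T" using t x by (auto intro: generate.incl generate.inv)
  then have tx: "t \<otimes> x \<in> ?T" by (rule subgroup.m_closed[OF T])
  then have tx_carrier: "t \<otimes> x \<in> carrier G" by (rule subgroup.mem_carrier[OF T])
  have "rcoset_rep H (H #> (t \<otimes> x)) \<in> ?T"
    using rcoset_rep_in_transversal[OF tx_carrier] by (rule generate.incl)
  then have "s \<in> ?T" using s tx T by (simp add: subgroup.m_closed subgroup.m_inv_closed)
  moreover have "s \<in> H" using s rcoset_rep_mod[OF tx_carrier] by simp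
  ultimately show "s \<in> ?T \<inter> H" by blast
qed

lemma Schreier_rewriting:
  assumes "u \<in> generate G (rcoset_transversal H)" and "t \<in> rcoset_transversal H"
  shows "t \<otimes> u \<otimes> inv (rcoset_rep H (H #> (t \<otimes> u))) \<in> generate G (Schreier_generators H)"
  using assms
proof (induction arbitrary: t rule: generate.induct)
  case one
  then have "t \<in> carrier G" using rcoset_transversal_carrier by blast
  then show ?case using rcoset_rep_of_transversal[OF one] by (simp add: generate.one)
next
  case (incl x)
  then show ?case unfolding Schreier_generators_def by (intro generate.incl) blast
next
  case (inv x)
  then show ?case unfolding Schreier_generators_def by (intro generate.incl) blast
next
  case (eng x y)
  have T: "generate G (rcoset_transversal H) \<subseteq> carrier G"
    using generate_in_carrier[OF rcoset_transversal_carrier] by blast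
  have x: "x \<in> carrier G" and y: "y \<in> carrier G" and t: "t \<in> carrier G"
    using eng.hyps eng.prems T rcoset_transversal_carrier by auto
  let ?r = "rcoset_rep H (H #> (t \<otimes> x))"
  have r: "?r \<in> rcoset_transversal H" using rcoset_rep_in_transversal t x by simp
  then have "?r \<in> carrier G" using rcoset_transversal_carrier by blast
  moreover have "rcoset_rep H (H #> (?r \<otimes> y)) = rcoset_rep H (H #> (t \<otimes> (x \<otimes> y)))"
    using rcoset_rep_mult_cong[of "t \<otimes> x" y] t x y by (simp add: m_assoc)
  ultimately have "(t \<otimes> x \<otimes> inv ?r) \<otimes> (?r \<otimes> y \<otimes> inv (rcoset_rep H (H #> (?r \<otimes> y))))
      = t \<otimes> (x \<otimes> y) \<otimes> inv (rcoset_rep H (H #> (t \<otimes> (x \<otimes> y))))"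
    using t x y rcoset_rep_carrier rcoset_mem_rcosets by (simp add: m_assoc)
  then show ?case using generate.eng[OF eng.IH(1)[OF eng.prems] eng.IH(2)[OF r]] by simp
qed

lemma generate_Schreier_generators:
  "generate G (Schreier_generators H) = generate G (rcoset_transversal H) \<inter> H"
proof
  show "generate G (Schreier_generators H) \<subseteq> generate G (rcoset_transversal H) \<inter> H"
    using generate_subgroup_incl[OF Schreier_generators_subset]
      subgroups_Inter_pair[OF generate_is_subgroup[OF rcoset_transversal_carrier] H] by blast
  show "generate G (rcoset_transversal H) \<inter> H \<subseteq> generate G (Schreier_generators H)"
  proof
    fix u assume u: "u \<in> generate G (rcoset_transversal H) \<inter> H"
    then have "u \<in> carrier G" using subgroup.subset[OF H] by blast
    then show "u \<in> generate G (Schreier_generators H)"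
      using Schreier_rewriting[of u \<one>] u one_in_rcoset_transversal rcoset_rep_of_mem by simp
  qed
qed

end

end

lemma (in group) divisible_Mod_root:
  assumes A: "subgroup A G" and C: "C \<lhd> G" "C \<subseteq> A"
    and div: "divisible_group (G\<lparr>carrier := A\<rparr> Mod C)" and y: "y \<in> A" and n: "(n::nat) > 0"
  shows "\<exists>c\<in>C. \<exists>b\<in>A. y = c \<otimes> b [^] n"
proof -
  let ?A = "G\<lparr>carrier := A\<rparr>"
  have CA: "C \<lhd> ?A" by (rule normal_restrict_supergroup[OF A C])
  have coset_hom: "group_hom ?A (?A Mod C) (\<lambda>a. C #>\<^bsub>?A\<^esub> a)"
    using subgroup_imp_group[OF A] normal.factorgroup_is_group[OF CA] normal.r_coset_hom_Mod[OF CA]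
    unfolding group_hom_def group_hom_axioms_def by blast
  have "C #>\<^bsub>?A\<^esub> y \<in> carrier (?A Mod C)"
    unfolding FactGroup_def RCOSETS_def using y by auto
  then obtain Y where Y: "Y \<in> carrier (?A Mod C)" "Y [^]\<^bsub>?A Mod C\<^esub> n = C #>\<^bsub>?A\<^esub> y"
    using div n unfolding divisible_group_def by blast
  then obtain b where b: "b \<in> A" "Y = C #>\<^bsub>?A\<^esub> b"
    unfolding FactGroup_def RCOSETS_def by auto
  have "C #>\<^bsub>?A\<^esub> (b [^]\<^bsub>?A\<^esub> n) = C #>\<^bsub>?A\<^esub> y"
    using group_hom.hom_nat_pow[OF coset_hom, of b n] b Y(2) by simp
  then have "C #> (b [^] n) = C #> y"
    unfolding r_coset_def by (simp add: nat_pow_consistent[of b n A])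
  then have "y \<in> C #> (b [^] n)"
    using rcos_self[OF _ normal_imp_subgroup[OF C(1)]] y subgroup.mem_carrier[OF A] by metis
  then show ?thesis using b(1) unfolding r_coset_def by blast
qed

locale abelian_normal_subgroup = group G for G (structure) +
  fixes A
  assumes normal_A: "A \<lhd> G"
    and comm_group_A: "comm_group (G\<lparr>carrier := A\<rparr>)"
begin

sublocale A: comm_group "G\<lparr>carrier := A\<rparr>" by (rule comm_group_A)

lemma subgroup_A: "subgroup A G"
  by (rule normal_imp_subgroup[OF normal_A])

lemma A_carrier [simp]: "a \<in> A \<Longrightarrow> a \<in> carrier G"
  by (rule subgroup.mem_carrier[OF subgroup_A])

lemma A_m_comm: "x \<in> A \<Longrightarrow> y \<in> A \<Longrightarrow> x \<otimes> y = y \<otimes> x"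
  using A.m_comm by simp

lemma conj_A_closed: "g \<in> carrier G \<Longrightarrow> a \<in> A \<Longrightarrow> inv g \<otimes> a \<otimes> g \<in> A"
  by (rule normal.inv_op_closed1[OF normal_A])

lemma commutator_eq_conj_mult: "x \<in> carrier G \<Longrightarrow> y \<in> carrier G \<Longrightarrow>
    commutator G x y = (inv x \<otimes> inv y \<otimes> x) \<otimes> y"
  by (simp add: commutator_def)

lemma commutator_in_A: "x \<in> carrier G \<Longrightarrow> y \<in> A \<Longrightarrow> commutator G x y \<in> A"
  using commutator_eq_conj_mult conj_A_closed subgroup_A
  by (simp add: subgroup.m_closed subgroup.m_inv_closed)

lemma commutator_mult_right:
  assumes x: "x \<in> carrier G" and y: "y \<in> A" and z: "z \<in> A"
  shows "commutator G x (y \<otimes> z) = commutator G x y \<otimes> commutator G x z"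
proof -
  define u where "u = inv x \<otimes> inv y \<otimes> x"
  define v where "v = inv x \<otimes> inv z \<otimes> x"
  have u: "u \<in> A" and v: "v \<in> A"
    unfolding u_def v_def using x y z conj_A_closed subgroup.m_inv_closed[OF subgroup_A] by auto
  have "commutator G x (y \<otimes> z) = v \<otimes> u \<otimes> (y \<otimes> z)"
    unfolding commutator_def u_def v_def using x y z by (simp add: m_assoc inv_mult_group)
  also have "\<dots> = (u \<otimes> y) \<otimes> (v \<otimes> z)"
  proof -
    have "v \<otimes> u \<otimes> (y \<otimes> z) = v \<otimes> ((u \<otimes> y) \<otimes> z)" using u v y z by (simp add: m_assoc)
    also have "\<dots> = (u \<otimes> y) \<otimes> (v \<otimes> z)"
      using A.m_lcomm[of v "u \<otimes> y" z] u v y z subgroup.m_closed[OF subgroup_A] by simp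
    finally show ?thesis .
  qed
  also have "\<dots> = commutator G x y \<otimes> commutator G x z"
    unfolding u_def v_def using x y z by (simp add: commutator_eq_conj_mult)
  finally show ?thesis .
qed

lemma commutator_one_right [simp]: "x \<in> carrier G \<Longrightarrow> commutator G x \<one> = \<one>"
  by (simp add: commutator_def)

lemma commutator_pow_right:
  assumes x: "x \<in> carrier G" and y: "y \<in> A"
  shows "commutator G x (y [^] (n::nat)) = commutator G x y [^] n"
proof (induction n)
  case (Suc n)
  have "y [^] n \<in> A" by (rule subgroup_nat_pow_closed[OF subgroup_A y])
  then show ?case using Suc commutator_mult_right[OF x _ y] by simp
qed (simp add: x)

lemma conj_by_A: "a \<in> A \<Longrightarrow> b \<in> A \<Longrightarrow> inv a \<otimes> b \<otimes> a = b"
  using A_m_comm[of b a] by (simp add: m_assoc)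

lemma commutator_mult_left:
  assumes a: "a \<in> A" and t: "t \<in> carrier G" and y: "y \<in> A"
  shows "commutator G (a \<otimes> t) y = commutator G t y"
proof -
  have "commutator G (a \<otimes> t) y = inv t \<otimes> (inv a \<otimes> inv y \<otimes> a) \<otimes> t \<otimes> y"
    unfolding commutator_def using a t y by (simp add: m_assoc inv_mult_group)
  also have "inv a \<otimes> inv y \<otimes> a = inv y"
    using conj_by_A a y subgroup.m_inv_closed[OF subgroup_A] by blast
  finally show ?thesis by (simp add: commutator_def)
qed

lemma conj_rcoset_cong:
  assumes x: "x \<in> carrier G" and y: "y \<in> carrier G" and eq: "A #> x = A #> y" and b: "b \<in> A"
  shows "inv x \<otimes> b \<otimes> x = inv y \<otimes> b \<otimes> y"
proof -
  define a where "a = x \<otimes> inv y"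
  have a: "a \<in> A"
    using eq rcos_self[OF x subgroup_A] subgroup.rcos_module_imp[OF subgroup_A is_group y]
    unfolding a_def by simp
  have "x = a \<otimes> y" unfolding a_def using x y by (simp add: m_assoc)
  then have "inv x \<otimes> b \<otimes> x = inv y \<otimes> (inv a \<otimes> b \<otimes> a) \<otimes> y"
    using a b y by (simp add: m_assoc inv_mult_group)
  then show ?thesis using conj_by_A[OF a b] by simp
qed

lemma conj_finprod:
  assumes g: "g \<in> carrier G" and f: "f \<in> I \<rightarrow> A"
  shows "inv g \<otimes> finprod (G\<lparr>carrier := A\<rparr>) f I \<otimes> g
       = finprod (G\<lparr>carrier := A\<rparr>) (\<lambda>i. inv g \<otimes> f i \<otimes> g) I"
  using f
proof (induction I rule: infinite_finite_induct)
  case (insert i I)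
  have conj_f: "(\<lambda>i. inv g \<otimes> f i \<otimes> g) \<in> insert i I \<rightarrow> A"
    using insert.prems g conj_A_closed by blast
  have "finprod (G\<lparr>carrier := A\<rparr>) f I \<in> A" using insert.prems A.finprod_closed[of f I] by auto
  then have "inv g \<otimes> (f i \<otimes> finprod (G\<lparr>carrier := A\<rparr>) f I) \<otimes> g
      = (inv g \<otimes> f i \<otimes> g) \<otimes> (inv g \<otimes> finprod (G\<lparr>carrier := A\<rparr>) f I \<otimes> g)"
    using insert.prems g by (simp add: m_assoc)
  with insert conj_f show ?case by (simp add: Pi_iff)
qed (simp_all add: g)

definition coset_norm :: "'a \<Rightarrow> 'a" where
  "coset_norm b =
     finprod (G\<lparr>carrier := A\<rparr>) (\<lambda>Q. inv (rcoset_rep A Q) \<otimes> b \<otimes> rcoset_rep A Q) (rcosets A)"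

lemma coset_norm_closed:
  assumes "b \<in> A" shows "coset_norm b \<in> A"
proof -
  have "(\<lambda>Q. inv (rcoset_rep A Q) \<otimes> b \<otimes> rcoset_rep A Q) \<in> rcosets A \<rightarrow> A"
    using assms conj_A_closed rcoset_rep_carrier[OF subgroup_A] by blast
  then show ?thesis unfolding coset_norm_def using A.finprod_closed by simp
qed

lemma conj_rcoset_rep_conj:
  assumes g: "g \<in> carrier G" and Q: "Q \<in> rcosets A" and b: "b \<in> A"
  shows "inv g \<otimes> (inv (rcoset_rep A Q) \<otimes> b \<otimes> rcoset_rep A Q) \<otimes> g
       = inv (rcoset_rep A (Q #> g)) \<otimes> b \<otimes> rcoset_rep A (Q #> g)"
proof -
  let ?r = "rcoset_rep A"
  have r: "?r Q \<in> carrier G" by (rule rcoset_rep_carrier[OF subgroup_A Q])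
  have Qg: "Q #> g \<in> rcosets A" by (rule bij_betw_apply[OF bij_betw_r_coset_rcosets[OF subgroup_A g] Q])
  have "A #> (?r Q \<otimes> g) = Q #> g"
    using coset_mult_assoc[OF subgroup.subset[OF subgroup_A] r g] rcoset_rep_rcoset[OF subgroup_A Q]
    by simp
  also have "\<dots> = A #> ?r (Q #> g)" using rcoset_rep_rcoset[OF subgroup_A Qg] by simp
  finally have "inv (?r Q \<otimes> g) \<otimes> b \<otimes> (?r Q \<otimes> g) = inv (?r (Q #> g)) \<otimes> b \<otimes> ?r (Q #> g)"
    using conj_rcoset_cong r Qg rcoset_rep_carrier[OF subgroup_A] g b by simp
  then show ?thesis using r g b by (simp add: m_assoc inv_mult_group)
qed

text \<open>Conjugation by \<open>g\<close> maps the factor of the coset \<open>Q\<close> to that of \<open>Q #> g\<close>, and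
  \<open>Q \<mapsto> Q #> g\<close> permutes the cosets.\<close>

lemma conj_coset_norm:
  assumes g: "g \<in> carrier G" and b: "b \<in> A"
  shows "inv g \<otimes> coset_norm b \<otimes> g = coset_norm b"
proof -
  let ?f = "\<lambda>Q. inv (rcoset_rep A Q) \<otimes> b \<otimes> rcoset_rep A Q"
  have f: "?f \<in> rcosets A \<rightarrow> A"
    using rcoset_rep_carrier[OF subgroup_A] conj_A_closed b by blast
  have bij: "bij_betw (\<lambda>Q. Q #> g) (rcosets A) (rcosets A)"
    by (rule bij_betw_r_coset_rcosets[OF subgroup_A g])
  have "inv g \<otimes> coset_norm b \<otimes> g = finprod (G\<lparr>carrier := A\<rparr>) (\<lambda>Q. ?f (Q #> g)) (rcosets A)"
    unfolding coset_norm_def conj_finprod[OF g f]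
    using conj_rcoset_rep_conj[OF g _ b] f bij_betw_apply[OF bij]
    by (intro A.finprod_cong') (auto simp: Pi_iff)
  also have "\<dots> = finprod (G\<lparr>carrier := A\<rparr>) ?f ((\<lambda>Q. Q #> g) ` (rcosets A))"
    using A.finprod_reindex[of ?f "\<lambda>Q. Q #> g" "rcosets A"] f bij
    by (simp add: bij_betw_def)
  also have "\<dots> = coset_norm b"
    using bij by (simp add: bij_betw_def coset_norm_def)
  finally show ?thesis .
qed

lemma commutator_subgroup_subset_A: "commutator_subgroup G (carrier G) A \<subseteq> A"
  by (rule commutator_subgroup_subset[OF subgroup_A commutator_in_A])

lemma finprod_in_subgroup:
  assumes K: "subgroup K G" "K \<subseteq> A" and f: "f \<in> I \<rightarrow> K"
  shows "finprod (G\<lparr>carrier := A\<rparr>) f I \<in> K"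
  using f
proof (induction I rule: infinite_finite_induct)
  case (insert i I)
  then have "f \<in> insert i I \<rightarrow> A" using K(2) by blast
  then show ?case using insert subgroup.m_closed[OF K(1)] by (simp add: Pi_iff)
qed (simp_all add: subgroup.one_closed[OF K(1)])

lemma pow_card_rcosets_eq_coset_norm_mult:
  assumes b: "b \<in> A"
  shows "\<exists>k\<in>commutator_subgroup G (carrier G) A. b [^] card (rcosets A) = coset_norm b \<otimes> k"
proof
  let ?r = "rcoset_rep A"
  let ?k = "finprod (G\<lparr>carrier := A\<rparr>) (\<lambda>Q. commutator G (?r Q) b) (rcosets A)"
  have r: "?r Q \<in> carrier G" if "Q \<in> rcosets A" for Q
    using rcoset_rep_carrier[OF subgroup_A that] .
  have N: "(\<lambda>Q. inv (?r Q) \<otimes> b \<otimes> ?r Q) \<in> rcosets A \<rightarrow> A"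
    using r conj_A_closed b by blast
  have K: "(\<lambda>Q. commutator G (?r Q) b) \<in> rcosets A \<rightarrow> commutator_subgroup G (carrier G) A"
    using r b commutator_in_commutator_subgroup by blast
  then have K_A: "(\<lambda>Q. commutator G (?r Q) b) \<in> rcosets A \<rightarrow> A"
    using commutator_subgroup_subset_A by blast
  have "b [^] card (rcosets A) = finprod (G\<lparr>carrier := A\<rparr>) (\<lambda>Q. b) (rcosets A)"
    using A.finprod_const[of b "rcosets A"] b by (simp add: nat_pow_consistent[of b _ A])
  also have "\<dots> = finprod (G\<lparr>carrier := A\<rparr>)
      (\<lambda>Q. (inv (?r Q) \<otimes> b \<otimes> ?r Q) \<otimes>\<^bsub>G\<lparr>carrier := A\<rparr>\<^esub> commutator G (?r Q) b) (rcosets A)"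
    using r b by (intro A.finprod_cong') (auto simp: m_assoc commutator_def)
  also have "\<dots> = coset_norm b \<otimes> ?k"
    using A.finprod_multf[of "\<lambda>Q. inv (?r Q) \<otimes> b \<otimes> ?r Q" "rcosets A"
        "\<lambda>Q. commutator G (?r Q) b"] N K_A
    by (simp add: coset_norm_def)
  finally show "b [^] card (rcosets A) = coset_norm b \<otimes> ?k" .
  show "?k \<in> commutator_subgroup G (carrier G) A"
    by (rule finprod_in_subgroup[OF _ commutator_subgroup_subset_A K])
      (simp add: commutator_subgroup_is_subgroup subgroup.subset[OF subgroup_A])
qed

lemma commutator_inv_right:
  assumes x: "x \<in> carrier G" and y: "y \<in> A"
  shows "commutator G x (inv y) = inv (commutator G x y)"
proof -
  have inv_y: "inv y \<in> A" using y by (rule subgroup.m_inv_closed[OF subgroup_A])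
  have "commutator G x (inv y) \<otimes> commutator G x y = \<one>"
    using commutator_mult_right[OF x inv_y y] x y by simp
  then show ?thesis
    using inv_equality commutator_in_A x y inv_y by (metis A_carrier)
qed

definition central_mod :: "'a set \<Rightarrow> 'a set" where
  "central_mod C = {a \<in> A. \<forall>g\<in>carrier G. commutator G g a \<in> C}"

lemma central_mod_subgroup:
  assumes C: "subgroup C G" shows "subgroup (central_mod C) G"
proof (rule subgroupI)
  show "central_mod C \<subseteq> carrier G" unfolding central_mod_def by auto
  show "central_mod C \<noteq> {}"
    using subgroup.one_closed[OF C] subgroup.one_closed[OF subgroup_A]
    unfolding central_mod_def by auto
  show "inv a \<in> central_mod C" if "a \<in> central_mod C" for a
    using that commutator_inv_right subgroup.m_inv_closed[OF C] subgroup.m_inv_closed[OF subgroup_A]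
    unfolding central_mod_def by auto
  show "a \<otimes> b \<in> central_mod C" if "a \<in> central_mod C" "b \<in> central_mod C" for a b
    using that commutator_mult_right subgroup.m_closed[OF C] subgroup.m_closed[OF subgroup_A]
    unfolding central_mod_def by auto
qed

lemma central_mod_normal:
  assumes C: "C \<lhd> G" shows "central_mod C \<lhd> G"
proof -
  have "x \<otimes> a \<otimes> inv x \<in> central_mod C" if x: "x \<in> carrier G" and a: "a \<in> central_mod C" for x a
  proof -
    have aA: "a \<in> A" and aC: "\<forall>g\<in>carrier G. commutator G g a \<in> C"
      using a unfolding central_mod_def by auto
    have "commutator G g (x \<otimes> a \<otimes> inv x) \<in> C" if g: "g \<in> carrier G" for g
    proof -
      have "commutator G g (x \<otimes> a \<otimes> inv x) = x \<otimes> commutator G (inv x \<otimes> g \<otimes> x) a \<otimes> inv x"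
        unfolding commutator_def using x g aA by (simp add: m_assoc inv_mult_group)
      then show ?thesis
        using normal.inv_op_closed2[OF C x] aC g x by simp
    qed
    moreover have "x \<otimes> a \<otimes> inv x \<in> A" using normal.inv_op_closed2[OF normal_A x aA] .
    ultimately show ?thesis unfolding central_mod_def by blast
  qed
  then show ?thesis
    using central_mod_subgroup[OF normal_imp_subgroup[OF C]] normal_inv_iff by blast
qed

lemma subset_central_mod:
  assumes C: "C \<lhd> G" "C \<subseteq> A" shows "C \<subseteq> central_mod C"
proof
  fix c assume c: "c \<in> C"
  have "commutator G g c \<in> C" if g: "g \<in> carrier G" for g
    using normal.inv_op_closed1[OF C(1) g subgroup.m_inv_closed[OF normal_imp_subgroup[OF C(1)] c]]
      subgroup.m_closed[OF normal_imp_subgroup[OF C(1)]] c g C(2)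
    by (simp add: commutator_eq_conj_mult subsetD)
  then show "c \<in> central_mod C" using c C(2) unfolding central_mod_def by blast
qed

lemma commutator_coset_norm:
  assumes g: "g \<in> carrier G" and b: "b \<in> A"
  shows "commutator G g (coset_norm b) = \<one>"
proof -
  have N: "coset_norm b \<in> carrier G" using coset_norm_closed[OF b] by simp
  have "inv g \<otimes> inv (coset_norm b) \<otimes> g = inv (inv g \<otimes> coset_norm b \<otimes> g)"
    using g N by (simp add: m_assoc inv_mult_group)
  then show ?thesis using conj_coset_norm[OF g b] g N by (simp add: commutator_def)
qed

lemma coset_norm_in_central_mod:
  "subgroup C G \<Longrightarrow> b \<in> A \<Longrightarrow> coset_norm b \<in> central_mod C"
  unfolding central_mod_def
  using coset_norm_closed commutator_coset_norm subgroup.one_closed by auto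

lemma commutator_subgroup_subset_normal_closure:
  assumes H: "H \<subseteq> carrier G" and T: "T \<subseteq> H" and AT: "A <#> T = carrier G"
  shows "commutator_subgroup G (carrier G) A \<subseteq> normal_closure G H"
proof (rule commutator_subgroup_subset[OF normal_closure_is_subgroup[OF H]])
  fix x y assume x: "x \<in> carrier G" and y: "y \<in> A"
  obtain a t where a: "a \<in> A" and t: "t \<in> T" and xat: "x = a \<otimes> t"
    using x AT unfolding set_mult_def by blast
  have t_carrier: "t \<in> carrier G" using t T H by blast
  have "commutator G x y = inv t \<otimes> (inv y \<otimes> t \<otimes> inv (inv y))"
    using commutator_mult_left[OF a t_carrier y] t_carrier y
    by (simp add: xat commutator_def m_assoc)
  moreover have "inv t \<in> normal_closure G H"
    using subset_normal_closure[OF H] t T normal_closure_is_subgroup[OF H]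
    by (blast intro: subgroup.m_inv_closed)
  moreover have "inv y \<otimes> t \<otimes> inv (inv y) \<in> normal_closure G H"
    by (rule conj_in_normal_closure) (use t T y in auto)
  ultimately show "commutator G x y \<in> normal_closure G H"
    using subgroup.m_closed[OF normal_closure_is_subgroup[OF H]] by simp
qed

end

locale divisible_abelian_section = abelian_normal_subgroup +
  fixes C
  assumes finite_index: "finite (rcosets A)"
    and normal_C: "C \<lhd> G"
    and C_subset_A: "C \<subseteq> A"
    and divisible: "divisible_group (G\<lparr>carrier := A\<rparr> Mod C)"
begin

lemma subgroup_C: "subgroup C G"
  by (rule normal_imp_subgroup[OF normal_C])

lemma root_mod_C: "y \<in> A \<Longrightarrow> (n::nat) > 0 \<Longrightarrow> \<exists>c\<in>C. \<exists>b\<in>A. y = c \<otimes> b [^] n"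
  by (rule divisible_Mod_root[OF subgroup_A normal_C C_subset_A divisible])

lemma A_subset_if_central_mod_commutators_subset:
  assumes L: "subgroup L G" and "central_mod C \<subseteq> L"
    and "commutator_subgroup G (carrier G) A \<subseteq> L"
  shows "A \<subseteq> L"
proof
  fix a assume a: "a \<in> A"
  have "A #> \<one> \<in> rcosets A" by (rule rcoset_mem_rcosets[OF subgroup_A]) simp
  then have "card (rcosets A) > 0" using finite_index card_gt_0_iff by blast
  then obtain c b where c: "c \<in> C" and b: "b \<in> A" and acb: "a = c \<otimes> b [^] card (rcosets A)"
    using root_mod_C[OF a] by blast
  obtain k where k: "k \<in> commutator_subgroup G (carrier G) A"
    and bk: "b [^] card (rcosets A) = coset_norm b \<otimes> k"
    using pow_card_rcosets_eq_coset_norm_mult[OF b] by blast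
  have "c \<in> L" using c subset_central_mod[OF normal_C C_subset_A] assms(2) by blast
  moreover have "coset_norm b \<in> L" using coset_norm_in_central_mod[OF subgroup_C b] assms(2) by blast
  moreover have "k \<in> L" using k assms(3) by blast
  ultimately show "a \<in> L" using acb bk subgroup.m_closed[OF L] by simp
qed

lemma normal_closure_eq_carrier:
  assumes H: "subgroup H G" and MH: "central_mod C \<subseteq> H"
    and TH: "T \<subseteq> H" and AT: "A <#> T = carrier G"
  shows "normal_closure G H = carrier G"
proof
  have H_carrier: "H \<subseteq> carrier G" by (rule subgroup.subset[OF H])
  let ?L = "normal_closure G H"
  have L: "subgroup ?L G" by (rule normal_closure_is_subgroup[OF H_carrier])
  show "?L \<subseteq> carrier G" by (rule subgroup.subset[OF L])
  have "A \<subseteq> ?L"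
    using A_subset_if_central_mod_commutators_subset[OF L] MH subset_normal_closure[OF H_carrier]
      commutator_subgroup_subset_normal_closure[OF H_carrier TH AT] by blast
  moreover have "T \<subseteq> ?L" using TH subset_normal_closure[OF H_carrier] by blast
  ultimately have "A <#> T \<subseteq> ?L"
    using subgroup.m_closed[OF L] unfolding set_mult_def by blast
  then show "carrier G \<subseteq> ?L" using AT by simp
qed

lemma commutator_pow_in_C:
  assumes S: "subgroup S G" and MS: "central_mod C <#> S = carrier G"
    and S_exp: "\<And>s. s \<in> S \<inter> A \<Longrightarrow> s [^] (E::nat) = \<one>"
    and x: "x \<in> carrier G" and b: "b \<in> A"
  shows "commutator G x b [^] E \<in> C"
proof -
  have "b \<in> central_mod C <#> S" "x \<in> central_mod C <#> S" using b x MS by auto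
  then obtain m s m' s' where m: "m \<in> central_mod C" and s: "s \<in> S" and bms: "b = m \<otimes> s"
    and m': "m' \<in> central_mod C" and s': "s' \<in> S" and xms: "x = m' \<otimes> s'"
    unfolding set_mult_def by blast
  have mA: "m \<in> A" and m'A: "m' \<in> A" and xm: "commutator G x m \<in> C"
    using m m' x unfolding central_mod_def by auto
  have s'_carrier: "s' \<in> carrier G" using s' subgroup.mem_carrier[OF S] by blast
  have sA: "s \<in> A"
  proof -
    have "s = inv m \<otimes> b" using bms mA s subgroup.mem_carrier[OF S] by simp
    then show ?thesis
      using mA b subgroup.m_closed[OF subgroup_A] subgroup.m_inv_closed[OF subgroup_A] by simp
  qed
  have "commutator G x b = commutator G x m \<otimes> commutator G s' s"
    using commutator_mult_right[OF x mA sA] commutator_mult_left[OF m'A s'_carrier sA] bms xms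
    by simp
  moreover have ss': "commutator G s' s \<in> S \<inter> A"
    using s s' sA s'_carrier subgroup.m_closed[OF S] subgroup.m_inv_closed[OF S] commutator_in_A
    by (simp add: commutator_def)
  moreover have "commutator G x m \<in> A" using xm C_subset_A by blast
  ultimately have "commutator G x b [^] E = commutator G x m [^] E"
    using pow_mult_distrib[OF A_m_comm] S_exp by simp
  then show ?thesis using xm subgroup_nat_pow_closed[OF subgroup_C] by simp
qed

lemma commutator_subgroup_subset_C_if_set_mult:
  assumes S: "subgroup S G" and MS: "central_mod C <#> S = carrier G"
    and E: "E > 0" and S_exp: "\<And>s. s \<in> S \<inter> A \<Longrightarrow> s [^] (E::nat) = \<one>"
  shows "commutator_subgroup G (carrier G) A \<subseteq> C"
proof (rule commutator_subgroup_subset[OF subgroup_C])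
  fix x y assume x: "x \<in> carrier G" and y: "y \<in> A"
  obtain c b where c: "c \<in> C" and b: "b \<in> A" and ycb: "y = c \<otimes> b [^] E"
    using root_mod_C[OF y E] by blast
  have "commutator G x y = commutator G x c \<otimes> commutator G x b [^] E"
    using commutator_mult_right[OF x _ subgroup_nat_pow_closed[OF subgroup_A b]]
      commutator_pow_right[OF x b] c C_subset_A ycb by auto
  moreover have "commutator G x c \<in> C"
    using c x subset_central_mod[OF normal_C C_subset_A] unfolding central_mod_def by blast
  moreover have "commutator G x b [^] E \<in> C"
    by (rule commutator_pow_in_C[OF S MS S_exp x b])
  ultimately show "commutator G x y \<in> C" using subgroup.m_closed[OF subgroup_C] by simp
qed

lemma generate_transversal_Int_exponent:
  assumes periodic: "\<And>x. x \<in> carrier G \<Longrightarrow> \<exists>n::nat>0. x [^] n = \<one>"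
  obtains E :: nat
  where "E > 0" "\<And>s. s \<in> generate G (rcoset_transversal A) \<inter> A \<Longrightarrow> s [^] E = \<one>"
proof -
  let ?F = "Schreier_generators A"
  have F_A: "?F \<subseteq> A" using Schreier_generators_subset[OF subgroup_A] by blast
  then have "?F \<subseteq> carrier G" by auto
  then have "\<exists>E::nat>0. \<forall>x\<in>?F. x [^] E = \<one>"
    using finite_set_exponent[OF finite_Schreier_generators[OF subgroup_A finite_index]] periodic
    by (meson subsetD)
  then obtain E :: nat where E: "E > 0" "\<forall>x\<in>?F. x [^] E = \<one>" by blast
  have "s [^] E = \<one>" if "s \<in> generate G (rcoset_transversal A) \<inter> A" for s
    using generate_pow_eq_one[OF subgroup_A A_m_comm F_A] E(2) that
      generate_Schreier_generators[OF subgroup_A] by simp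
  with E(1) show ?thesis by (rule that)
qed

lemma commutator_subgroup_subset_C_if_no_contranormal:
  assumes periodic: "\<And>x. x \<in> carrier G \<Longrightarrow> \<exists>n::nat>0. x [^] n = \<one>"
    and no_contranormal: "\<And>H. contranormal G H \<Longrightarrow> H = carrier G"
  shows "commutator_subgroup G (carrier G) A \<subseteq> C"
proof -
  let ?T = "rcoset_transversal A"
  let ?S = "generate G ?T"
  obtain E :: nat where E: "E > 0" "\<And>s. s \<in> ?S \<inter> A \<Longrightarrow> s [^] E = \<one>"
    using generate_transversal_Int_exponent[OF periodic] by blast
  have T: "?T \<subseteq> carrier G" by (rule rcoset_transversal_carrier[OF subgroup_A])
  have S: "subgroup ?S G" by (rule generate_is_subgroup[OF T])
  have MS: "second_isomorphism_grp (central_mod C) G ?S"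
    unfolding second_isomorphism_grp_def second_isomorphism_grp_axioms_def
    using central_mod_normal[OF normal_C] S by simp
  have "?T \<subseteq> ?S" using generate.incl[of _ ?T G] by blast
  then have "normal_closure G (central_mod C <#> ?S) = carrier G"
    using normal_closure_eq_carrier[OF second_isomorphism_grp.normal_set_mult_subgroup[OF MS]
        second_isomorphism_grp.H_contained_in_set_mult[OF MS]]
      second_isomorphism_grp.S_contained_in_set_mult[OF MS] set_mult_rcoset_transversal[OF subgroup_A]
    by blast
  then have "central_mod C <#> ?S = carrier G"
    using no_contranormal second_isomorphism_grp.normal_set_mult_subgroup[OF MS]
    unfolding contranormal_def by blast
  then show ?thesis using commutator_subgroup_subset_C_if_set_mult[OF S _ E] by blast
qed

end

theorem lemma2p6:
  fixes G :: "('a, 'b) monoid_scheme" and p :: nat and A C :: "'a set"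
  assumes "group G"
    and "Factorial_Ring.prime p"
    and "p_group G p"
    and "A \<lhd> G"
    and "comm_group (G\<lparr>carrier := A\<rparr>)"
    and "finite (rcosets\<^bsub>G\<^esub> A)"
    and "C \<subseteq> A"
    and "C \<lhd> G"
    and "divisible_chernikov_group ((G\<lparr>carrier := A\<rparr>) Mod C)"
    and "\<forall>H. contranormal G H \<longrightarrow> H = carrier G"
  shows "commutator_subgroup G (carrier G) A \<subseteq> C"
proof -
  interpret divisible_abelian_section G A C
    by (intro divisible_abelian_section.intro abelian_normal_subgroup.intro
        abelian_normal_subgroup_axioms.intro divisible_abelian_section_axioms.intro)
      (use assms in \<open>auto simp: divisible_chernikov_group_def\<close>)
  show ?thesis
  proof (rule commutator_subgroup_subset_C_if_no_contranormal)
    fix x assume "x \<in> carrier G"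
    then obtain n where "x [^]\<^bsub>G\<^esub> (p ^ n) = \<one>\<^bsub>G\<^esub>"
      using assms(3) unfolding p_group_def by blast
    moreover have "p ^ n > 0" using prime_gt_0_nat[OF assms(2)] by simp
    ultimately show "\<exists>n::nat>0. x [^]\<^bsub>G\<^esub> n = \<one>\<^bsub>G\<^esub>" by blast
  qed (use assms(10) in blast)
qed

end
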